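(* Let $M,N$ be $\lambda$-terms. (1) $M\simeq_\beta N$ iff $M^n\simeq_v N^n$ iff $M^n\simeq_b N^n$. (2) $M$ is $\beta$-normal iff $M^n$ is $v$-normal iff $M^n$ is $b$-normal; and $M$ is $w\beta$-normal iff $M^n$ is $wv$-normal iff $M^n$ is $wb$-normal.
   Context: Bang calculus. The set $!\Lambda$ of terms is $T,S,R ::= x \mid \lambda x.T \mid T\,S \mid \mathrm{der}\,T \mid\ !T$; $\lambda$ the only binder, up to $\alpha$-conversion, $T\{S/x\}$ capture-avoiding substitution. Contexts: $C ::= [\cdot] \mid \lambda x.C \mid C\,T \mid T\,C \mid \mathrm{der}\,C \mid\ !C$; ground contexts: $W ::= [\cdot] \mid \lambda x.W \mid W\,T \mid T\,W \mid \mathrm{der}\,W$. Root steps: $(\lambda x.T)(!S)\mapsto_v T\{S/x\}$, $\mathrm{der}(!T)\mapsto_d T$, $\mapsto_b\,=\,\mapsto_v\cup\mapsto_d$. For $r\in\{v,d,b\}$, $\to_r$ is the closure of $\mapsto_r$ under contexts and $\to_{wr}$ its closure under ground contexts. $\lambda$-calculus: $M,N ::= x\mid\lambda x.M\mid MN$; $\to_\beta$ is the closure of $(\lambda x.M)N\mapsto_\beta M\{N/x\}$ under all $\lambda$-contexts $C ::= [\cdot]\mid \lambda x.C\mid C\,M\mid M\,C$, and $\to_{w\beta}$ its closure under CbN ground contexts $N ::= [\cdot]\mid\lambda x.N\mid N\,M$. CbN translation: $x^n=x$, $(\lambda x.M)^n=\lambda x.M^n$, $(MN)^n=M^n\,(!N^n)$.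 For a relation $\to_r$: $\simeq_r$ is its reflexive-symmetric-transitive closure; a term is $r$-normal if it has no $\to_r$-successor. *)

theory Defs
  imports Main
begin

(* Terms are represented with de Bruijn indices, i.e. quotiented by alpha-conversion. *)

datatype lterm = LVar nat | LAbs lterm | LApp lterm lterm

datatype bterm = BVar nat | BAbs bterm | BApp bterm bterm | Der bterm | Bang bterm

fun llift :: "lterm \<Rightarrow> nat \<Rightarrow> lterm" where
  "llift (LVar i) k = (if i < k then LVar i else LVar (Suc i))"
| "llift (LAbs t) k = LAbs (llift t (Suc k))"
| "llift (LApp s t) k = LApp (llift s k) (llift t k)"

fun lsubst :: "lterm \<Rightarrow> nat \<Rightarrow> lterm \<Rightarrow> lterm" where
  "lsubst (LVar i) k u = (if k < i then LVar (i - 1) else if i = k then u else LVar i)"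
| "lsubst (LAbs t) k u = LAbs (lsubst t (Suc k) (llift u 0))"
| "lsubst (LApp s t) k u = LApp (lsubst s k u) (lsubst t k u)"

fun blift :: "bterm \<Rightarrow> nat \<Rightarrow> bterm" where
  "blift (BVar i) k = (if i < k then BVar i else BVar (Suc i))"
| "blift (BAbs t) k = BAbs (blift t (Suc k))"
| "blift (BApp s t) k = BApp (blift s k) (blift t k)"
| "blift (Der t) k = Der (blift t k)"
| "blift (Bang t) k = Bang (blift t k)"

fun bsubst :: "bterm \<Rightarrow> nat \<Rightarrow> bterm \<Rightarrow> bterm" where
  "bsubst (BVar i) k u = (if k < i then BVar (i - 1) else if i = k then u else BVar i)"
| "bsubst (BAbs t) k u = BAbs (bsubst t (Suc k) (blift u 0))"
| "bsubst (BApp s t) k u = BApp (bsubst s k u) (bsubst t k u)"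
| "bsubst (Der t) k u = Der (bsubst t k u)"
| "bsubst (Bang t) k u = Bang (bsubst t k u)"

inductive root_beta :: "lterm \<Rightarrow> lterm \<Rightarrow> bool" where
  "root_beta (LApp (LAbs m) n) (lsubst m 0 n)"

inductive root_v :: "bterm \<Rightarrow> bterm \<Rightarrow> bool" where
  "root_v (BApp (BAbs t) (Bang s)) (bsubst t 0 s)"

inductive root_d :: "bterm \<Rightarrow> bterm \<Rightarrow> bool" where
  "root_d (Der (Bang t)) t"

definition root_b :: "bterm \<Rightarrow> bterm \<Rightarrow> bool" where
  "root_b t u \<longleftrightarrow> root_v t u \<or> root_d t u"

inductive lctx :: "(lterm \<Rightarrow> lterm \<Rightarrow> bool) \<Rightarrow> lterm \<Rightarrow> lterm \<Rightarrow> bool" for r where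
  "r t u \<Longrightarrow> lctx r t u"
| "lctx r t u \<Longrightarrow> lctx r (LAbs t) (LAbs u)"
| "lctx r t u \<Longrightarrow> lctx r (LApp t s) (LApp u s)"
| "lctx r t u \<Longrightarrow> lctx r (LApp s t) (LApp s u)"

inductive lwctx :: "(lterm \<Rightarrow> lterm \<Rightarrow> bool) \<Rightarrow> lterm \<Rightarrow> lterm \<Rightarrow> bool" for r where
  "r t u \<Longrightarrow> lwctx r t u"
| "lwctx r t u \<Longrightarrow> lwctx r (LAbs t) (LAbs u)"
| "lwctx r t u \<Longrightarrow> lwctx r (LApp t s) (LApp u s)"

inductive bctx :: "(bterm \<Rightarrow> bterm \<Rightarrow> bool) \<Rightarrow> bterm \<Rightarrow> bterm \<Rightarrow> bool" for r where
  "r t u \<Longrightarrow> bctx r t u"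
| "bctx r t u \<Longrightarrow> bctx r (BAbs t) (BAbs u)"
| "bctx r t u \<Longrightarrow> bctx r (BApp t s) (BApp u s)"
| "bctx r t u \<Longrightarrow> bctx r (BApp s t) (BApp s u)"
| "bctx r t u \<Longrightarrow> bctx r (Der t) (Der u)"
| "bctx r t u \<Longrightarrow> bctx r (Bang t) (Bang u)"

inductive bwctx :: "(bterm \<Rightarrow> bterm \<Rightarrow> bool) \<Rightarrow> bterm \<Rightarrow> bterm \<Rightarrow> bool" for r where
  "r t u \<Longrightarrow> bwctx r t u"
| "bwctx r t u \<Longrightarrow> bwctx r (BAbs t) (BAbs u)"
| "bwctx r t u \<Longrightarrow> bwctx r (BApp t s) (BApp u s)"
| "bwctx r t u \<Longrightarrow> bwctx r (BApp s t) (BApp s u)"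
| "bwctx r t u \<Longrightarrow> bwctx r (Der t) (Der u)"

abbreviation beta_step :: "lterm \<Rightarrow> lterm \<Rightarrow> bool" where "beta_step \<equiv> lctx root_beta"
abbreviation wbeta_step :: "lterm \<Rightarrow> lterm \<Rightarrow> bool" where "wbeta_step \<equiv> lwctx root_beta"
abbreviation v_step :: "bterm \<Rightarrow> bterm \<Rightarrow> bool" where "v_step \<equiv> bctx root_v"
abbreviation b_step :: "bterm \<Rightarrow> bterm \<Rightarrow> bool" where "b_step \<equiv> bctx root_b"
abbreviation wv_step :: "bterm \<Rightarrow> bterm \<Rightarrow> bool" where "wv_step \<equiv> bwctx root_v"
abbreviation wb_step :: "bterm \<Rightarrow> bterm \<Rightarrow> bool" where "wb_step \<equiv> bwctx root_b"

definition normal :: "('a \<Rightarrow> 'a \<Rightarrow> bool) \<Rightarrow> 'a \<Rightarrow> bool" where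
  "normal r t \<longleftrightarrow> \<not> (\<exists>u. r t u)"

fun cbn :: "lterm \<Rightarrow> bterm" where
  "cbn (LVar i) = BVar i"
| "cbn (LAbs m) = BAbs (cbn m)"
| "cbn (LApp m n) = BApp (cbn m) (Bang (cbn n))"

end

theory Submission
  imports Defs
begin

(* The translation is a strict simulation: a beta-step M \<rightarrow> M' becomes the v-step cbn M \<rightarrow> cbn M',
   weak steps becoming weak steps. Conversely, cbn M contains no der, so every b-step out of
   cbn M is a v-step coming from a beta-step of M; this transfers normality back. For
   convertibility, the map erasing der and ! sends each b-step to at most one beta-step and is a
   left inverse of the translation. *)

fun erase :: "bterm \<Rightarrow> lterm" where
  "erase (BVar i) = LVar i"
| "erase (BAbs t) = LAbs (erase t)"
| "erase (BApp s t) = LApp (erase s) (erase t)"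
| "erase (Der t) = erase t"
| "erase (Bang t) = erase t"

lemma erase_cbn [simp]: "erase (cbn M) = M"
  by (induction M) auto

lemma cbn_llift [simp]: "cbn (llift m k) = blift (cbn m) k"
  by (induction m arbitrary: k) auto

lemma cbn_lsubst [simp]: "cbn (lsubst m k n) = bsubst (cbn m) k (cbn n)"
  by (induction m arbitrary: k n) auto

lemma erase_blift [simp]: "erase (blift t k) = llift (erase t) k"
  by (induction t arbitrary: k) auto

lemma erase_bsubst [simp]: "erase (bsubst t k u) = lsubst (erase t) k (erase u)"
  by (induction t arbitrary: k u) auto

lemma equivclp_map:
  assumes "\<And>x y. r x y \<Longrightarrow> equivclp s (f x) (f y)"
    and "equivclp r a b"
  shows "equivclp s (f a) (f b)"
  using assms(2)
proof (induction rule: equivclp_induct)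
  case base
  show ?case by simp
next
  case (step y z)
  then show ?case using assms(1) by (meson equivclp_sym equivclp_trans)
qed

lemma bctx_mono: "bctx r t u \<Longrightarrow> (\<And>x y. r x y \<Longrightarrow> s x y) \<Longrightarrow> bctx s t u"
  by (induction rule: bctx.induct) (auto intro: bctx.intros)

lemma bwctx_mono: "bwctx r t u \<Longrightarrow> (\<And>x y. r x y \<Longrightarrow> s x y) \<Longrightarrow> bwctx s t u"
  by (induction rule: bwctx.induct) (auto intro: bwctx.intros)

lemma root_v_imp_root_b: "root_v t u \<Longrightarrow> root_b t u"
  by (simp add: root_b_def)

lemma cbn_root_beta: "root_beta M M' \<Longrightarrow> root_v (cbn M) (cbn M')"
  by (induction rule: root_beta.induct) (simp add: root_v.intros)

lemma cbn_beta_step: "beta_step M M' \<Longrightarrow> v_step (cbn M) (cbn M')"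
  by (induction rule: lctx.induct) (auto intro: bctx.intros cbn_root_beta)

lemma cbn_wbeta_step: "wbeta_step M M' \<Longrightarrow> wv_step (cbn M) (cbn M')"
  by (induction rule: lwctx.induct) (auto intro: bwctx.intros cbn_root_beta)

lemma erase_root_b: "root_b T U \<Longrightarrow> beta_step\<^sup>=\<^sup>= (erase T) (erase U)"
  unfolding root_b_def
  by (auto elim!: root_v.cases root_d.cases intro!: lctx.intros(1) root_beta.intros)

lemma erase_b_step: "b_step T U \<Longrightarrow> beta_step\<^sup>=\<^sup>= (erase T) (erase U)"
  by (induction rule: bctx.induct) (auto intro: lctx.intros dest: erase_root_b)

lemma cbn_eq_BAbs_iff: "cbn M = BAbs t \<longleftrightarrow> (\<exists>M\<^sub>0. M = LAbs M\<^sub>0 \<and> t = cbn M\<^sub>0)"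
  by (cases M) auto

lemma root_b_cbn_reflect:
  assumes "root_b (cbn M) U"
  shows "\<exists>M'. root_beta M M' \<and> U = cbn M'"
proof -
  from assms obtain t s where "cbn M = BApp (BAbs t) (Bang s)" and "U = bsubst t 0 s"
    by (cases M) (auto simp: root_b_def elim!: root_v.cases root_d.cases)
  then obtain M\<^sub>0 N where "M = LApp (LAbs M\<^sub>0) N" "U = cbn (lsubst M\<^sub>0 0 N)"
    by (cases M) (auto simp: cbn_eq_BAbs_iff)
  then show ?thesis by (auto intro: root_beta.intros)
qed

lemma not_root_b_Bang: "\<not> root_b (Bang t) u"
  by (auto simp: root_b_def elim: root_v.cases root_d.cases)

lemma b_step_cbn_reflect: "b_step (cbn M) U \<Longrightarrow> \<exists>M'. beta_step M M' \<and> U = cbn M'"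
proof (induction M arbitrary: U)
  case (LVar i)
  then show ?case
    by (auto simp: root_b_def elim: bctx.cases root_v.cases root_d.cases)
next
  case (LAbs M)
  from LAbs.prems show ?case
  proof (cases rule: bctx.cases)
    case 1
    then show ?thesis using root_b_cbn_reflect[of "LAbs M"] by (auto intro: lctx.intros)
  next
    case (2 t u)
    with LAbs.IH obtain M' where "beta_step M M'" "u = cbn M'" by auto
    with 2 show ?thesis by (auto intro!: exI[of _ "LAbs M'"] lctx.intros)
  qed auto
next
  case (LApp M N)
  from LApp.prems show ?case
  proof (cases rule: bctx.cases)
    case 1
    then show ?thesis using root_b_cbn_reflect[of "LApp M N"] by (auto intro: lctx.intros)
  next
    case (3 t u s)
    with LApp.IH(1) obtain M' where "beta_step M M'" "u = cbn M'" by auto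
    with 3 show ?thesis by (auto intro!: exI[of _ "LApp M' N"] lctx.intros)
  next
    case (4 t u s)
    then have "b_step (Bang (cbn N)) u" by simp
    then obtain u' where "u = Bang u'" "b_step (cbn N) u'"
      by (cases rule: bctx.cases) (auto simp: not_root_b_Bang)
    with LApp.IH(2) obtain N' where "beta_step N N'" "u' = cbn N'" by blast
    with 4 \<open>u = Bang u'\<close> show ?thesis by (auto intro!: exI[of _ "LApp M N'"] lctx.intros)
  qed auto
qed

lemma wb_step_cbn_reflect: "wb_step (cbn M) U \<Longrightarrow> \<exists>M'. wbeta_step M M' \<and> U = cbn M'"
proof (induction M arbitrary: U)
  case (LVar i)
  then show ?case
    by (auto simp: root_b_def elim: bwctx.cases root_v.cases root_d.cases)
next
  case (LAbs M)
  from LAbs.prems show ?case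
  proof (cases rule: bwctx.cases)
    case 1
    then show ?thesis using root_b_cbn_reflect[of "LAbs M"] by (auto intro: lwctx.intros)
  next
    case (2 t u)
    with LAbs.IH obtain M' where "wbeta_step M M'" "u = cbn M'" by auto
    with 2 show ?thesis by (auto intro!: exI[of _ "LAbs M'"] lwctx.intros)
  qed auto
next
  case (LApp M N)
  from LApp.prems show ?case
  proof (cases rule: bwctx.cases)
    case 1
    then show ?thesis using root_b_cbn_reflect[of "LApp M N"] by (auto intro: lwctx.intros)
  next
    case (3 t u s)
    with LApp.IH(1) obtain M' where "wbeta_step M M'" "u = cbn M'" by auto
    with 3 show ?thesis by (auto intro!: exI[of _ "LApp M' N"] lwctx.intros)
  next
    case (4 t u s)
    then have "wb_step (Bang (cbn N)) u" by simp
    then show ?thesis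
      by (cases rule: bwctx.cases) (auto simp: not_root_b_Bang)
  qed auto
qed

theorem mainTheorem8:
  fixes M N :: lterm
  shows "(equivclp beta_step M N \<longleftrightarrow> equivclp v_step (cbn M) (cbn N))
       \<and> (equivclp v_step (cbn M) (cbn N) \<longleftrightarrow> equivclp b_step (cbn M) (cbn N))
       \<and> (normal beta_step M \<longleftrightarrow> normal v_step (cbn M))
       \<and> (normal v_step (cbn M) \<longleftrightarrow> normal b_step (cbn M))
       \<and> (normal wbeta_step M \<longleftrightarrow> normal wv_step (cbn M))
       \<and> (normal wv_step (cbn M) \<longleftrightarrow> normal wb_step (cbn M))"
proof -
  have v_imp_b: "v_step T U \<Longrightarrow> b_step T U" and wv_imp_wb: "wv_step T U \<Longrightarrow> wb_step T U" for T U
    by (auto elim: bctx_mono bwctx_mono intro: root_v_imp_root_b)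
  have "equivclp beta_step M N \<Longrightarrow> equivclp v_step (cbn M) (cbn N)"
    by (rule equivclp_map[of _ _ cbn]) (auto dest: cbn_beta_step)
  moreover have "equivclp v_step (cbn M) (cbn N) \<Longrightarrow> equivclp b_step (cbn M) (cbn N)"
    by (rule equivclp_map[of _ _ id, simplified]) (auto dest: v_imp_b)
  moreover have "equivclp b_step (cbn M) (cbn N) \<Longrightarrow> equivclp beta_step M N"
    using equivclp_map[of b_step beta_step erase "cbn M" "cbn N"] erase_b_step by fastforce
  ultimately show ?thesis
    unfolding normal_def
    using cbn_beta_step cbn_wbeta_step v_imp_b wv_imp_wb b_step_cbn_reflect wb_step_cbn_reflect
    by blast
qed

end
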